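(* Let $T$ be an $n$-simplex with vertices $\texttt v_0,\dots,\texttt v_n$, let $m\ge0$ and $k\ge 2m+1$, and let $i\in\{0,\dots,n\}$. Then the space $$\mathbb P_k(D(\texttt v_i,m))=\mathrm{span}\Big\{\lambda^\alpha:\alpha\in\mathbb T^n_k,\ \sum_{j\ne i}\alpha_j\le m\Big\}$$ is uniquely determined by the values $D^\beta u(\texttt v_i)$, $\beta\in\mathbb N^n$, $|\beta|\le m$; that is, the linear map $u\mapsto (D^\beta u(\texttt v_i))_{|\beta|\le m}$ is a bijection from this space onto $\mathbb R^{N}$ with $N=\#\{\beta\in\mathbb N^n:|\beta|\le m\}$.
   Context: $\lambda_0,\dots,\lambda_n$ are the barycentric coordinates of $T$; $\mathbb N$ includes $0$; $\mathbb T^n_k=\{\alpha\in\mathbb N^{n+1}:\sum_j\alpha_j=k\}$; $\lambda^\alpha=\prod_j\lambda_j^{\alpha_j}$; $D^\beta=\partial^{|\beta|}/\partial x_1^{\beta_1}\cdots\partial x_n^{\beta_n}$. *)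

theory Defs
  imports "HOL-Analysis.Analysis"
begin

text \<open>Points of R^n are represented as functions nat => real; only the
coordinates 0..n-1 are relevant (coordinates >= n are ignored throughout).\<close>

definition simplex_vertices :: "nat \<Rightarrow> (nat \<Rightarrow> nat \<Rightarrow> real) \<Rightarrow> bool" where
  "simplex_vertices n v \<longleftrightarrow>
     (\<forall>c::nat \<Rightarrow> real. (\<Sum>l\<le>n. c l) = 0 \<and> (\<forall>d<n. (\<Sum>l\<le>n. c l * v l d) = 0)
        \<longrightarrow> (\<forall>l\<le>n. c l = 0))"

definition bary :: "nat \<Rightarrow> (nat \<Rightarrow> nat \<Rightarrow> real) \<Rightarrow> nat \<Rightarrow> (nat \<Rightarrow> real) \<Rightarrow> real" where
  "bary n v j x = (THE c::nat \<Rightarrow> real. (\<forall>l>n. c l = 0) \<and> (\<Sum>l\<le>n. c l) = 1 \<and>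
        (\<forall>d<n. (\<Sum>l\<le>n. c l * v l d) = x d)) j"

definition bary_monomial :: "nat \<Rightarrow> (nat \<Rightarrow> nat \<Rightarrow> real) \<Rightarrow> (nat \<Rightarrow> nat) \<Rightarrow> (nat \<Rightarrow> real) \<Rightarrow> real" where
  "bary_monomial n v \<alpha> x = (\<Prod>j\<le>n. bary n v j x ^ \<alpha> j)"

definition Tset :: "nat \<Rightarrow> nat \<Rightarrow> (nat \<Rightarrow> nat) set" where
  "Tset n k = {\<alpha>. (\<forall>j>n. \<alpha> j = 0) \<and> (\<Sum>j\<le>n. \<alpha> j) = k}"

text \<open>P_k(D(v_i,m)) = span {lambda^alpha : alpha in T^n_k, sum_{j<>i} alpha_j <= m}
  (the index set is finite, so the span is the set of linear combinations).\<close>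
definition PkD :: "nat \<Rightarrow> (nat \<Rightarrow> nat \<Rightarrow> real) \<Rightarrow> nat \<Rightarrow> nat \<Rightarrow> nat \<Rightarrow> ((nat \<Rightarrow> real) \<Rightarrow> real) set" where
  "PkD n v k i m =
     {u. \<exists>c::(nat \<Rightarrow> nat) \<Rightarrow> real.
          u = (\<lambda>x. \<Sum>\<alpha>\<in>{\<alpha>\<in>Tset n k. (\<Sum>j\<in>{..n}-{i}. \<alpha> j) \<le> m}. c \<alpha> * bary_monomial n v \<alpha> x)}"

text \<open>Partial derivative with respect to the coordinate x_(d+1) (0-based index d).\<close>
definition partial :: "nat \<Rightarrow> ((nat \<Rightarrow> real) \<Rightarrow> real) \<Rightarrow> (nat \<Rightarrow> real) \<Rightarrow> real" where
  "partial d u x = deriv (\<lambda>t. u (x(d := x d + t))) 0"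

definition Dmulti :: "nat \<Rightarrow> (nat \<Rightarrow> nat) \<Rightarrow> ((nat \<Rightarrow> real) \<Rightarrow> real) \<Rightarrow> (nat \<Rightarrow> real) \<Rightarrow> real" where
  "Dmulti n \<beta> u = foldr (\<lambda>d f. (partial d ^^ \<beta> d) f) [0..<n] u"

definition Bset :: "nat \<Rightarrow> nat \<Rightarrow> (nat \<Rightarrow> nat) set" where
  "Bset n m = {\<beta>. (\<forall>d\<ge>n. \<beta> d = 0) \<and> (\<Sum>d<n. \<beta> d) \<le> m}"

end

theory Submission
  imports Defs "Jordan_Normal_Form.Determinant" "HOL-Library.Multiset"
begin

(* Writing alpha' for alpha with the i-th entry deleted, alpha |-> alpha' is a bijection
   from the index set of the spanning monomials onto {beta. |beta| <= m} (this uses only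
   m <= k), so the map u |-> (D^beta u(v_i))_beta is a linear map between spaces of the same
   finite dimension, and it suffices to show that a combination u = sum c_alpha lambda^alpha
   whose derivatives of order <= m vanish at v_i has all c_alpha = 0.
   The barycentric coordinates are affine with lambda_l(v_i) = delta_li, so the derivative
   along the edge v_j - v_i maps lambda^alpha to alpha_j lambda^(alpha - e_j)
   - alpha_i lambda^(alpha - e_i). If some c_alpha were nonzero, pick such an a of least
   vanishing order sum_(j <> i) a_j <= m at v_i and differentiate u a_j times along v_j - v_i
   for every j <> i: the result at v_i is 0 because the m-jet of u vanishes, but it is also
   c_a prod_(j <> i) a_j!, since the other monomials with nonzero coefficient contribute 0. *)

lemma square_linear_system_solvable:
  fixes M :: "'b \<Rightarrow> 'a \<Rightarrow> real"
  assumes fin: "finite A" "finite B" and card: "card A = card B"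
    and kernel: "\<And>c. \<forall>b\<in>B. (\<Sum>a\<in>A. c a * M b a) = 0 \<Longrightarrow> \<forall>a\<in>A. c a = 0"
  obtains c where "\<forall>b\<in>B. (\<Sum>a\<in>A. c a * M b a) = t b"
proof -
  define N where "N = card A"
  obtain eA where eA: "bij_betw eA {0..<N} A"
    using ex_bij_betw_nat_finite[OF fin(1)] unfolding N_def by blast
  obtain eB where eB: "bij_betw eB {0..<N} B"
    using ex_bij_betw_nat_finite[OF fin(2)] unfolding N_def card by blast
  define Mat :: "real mat" where "Mat = mat N N (\<lambda>(r, s). M (eB r) (eA s))"
  have Mat: "Mat \<in> carrier_mat N N" by (simp add: Mat_def)
  define coeffs where "coeffs y a = y $ inv_into {0..<N} eA a" for y :: "real vec" and a
  have coeffs_eA: "coeffs y (eA s) = y $ s" if "s < N" for y s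
    using that bij_betw_inv_into_left[OF eA] by (simp add: coeffs_def)
  have Mat_mult: "(Mat *\<^sub>v y) $ r = (\<Sum>a\<in>A. coeffs y a * M (eB r) a)"
    if "y \<in> carrier_vec N" "r < N" for y r
  proof -
    have "(Mat *\<^sub>v y) $ r = (\<Sum>s\<in>{0..<N}. coeffs y (eA s) * M (eB r) (eA s))"
      using that by (simp add: Mat_def scalar_prod_def coeffs_eA mult.commute)
    also have "\<dots> = (\<Sum>a\<in>A. coeffs y a * M (eB r) a)"
      by (rule sum.reindex_bij_betw[OF eA])
    finally show ?thesis .
  qed
  have B_eB: "\<exists>r<N. b = eB r" if "b \<in> B" for b
    using that bij_betw_imp_surj_on[OF eB] by force
  have "Determinant.det Mat \<noteq> 0"
  proof
    assume "Determinant.det Mat = 0"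
    then obtain y where y: "y \<in> carrier_vec N" "y \<noteq> 0\<^sub>v N" "Mat *\<^sub>v y = 0\<^sub>v N"
      using det_0_iff_vec_prod_zero[OF Mat] by blast
    have "\<forall>b\<in>B. (\<Sum>a\<in>A. coeffs y a * M b a) = 0"
      using B_eB Mat_mult y by force
    then have "\<forall>a\<in>A. coeffs y a = 0" by (rule kernel)
    then have "y $ s = 0" if "s < N" for s
      using coeffs_eA[OF that, of y] bij_betw_apply[OF eA, of s] that by (metis atLeastLessThan_iff zero_le)
    then have "y = 0\<^sub>v N" using y(1) by (intro eq_vecI) auto
    with y(2) show False ..
  qed
  then obtain Inv where Inv: "Inv \<in> carrier_mat N N" "Mat * Inv = 1\<^sub>m N"
    using det_non_zero_imp_unit[OF Mat, of "()"] by (auto simp: Units_def ring_mat_def)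
  define y where "y = Inv *\<^sub>v vec N (\<lambda>r. t (eB r))"
  have y: "y \<in> carrier_vec N" using Inv by (simp add: y_def)
  have "Mat *\<^sub>v y = vec N (\<lambda>r. t (eB r))"
    using Mat Inv by (simp add: y_def assoc_mult_mat_vec[symmetric])
  then have "\<forall>b\<in>B. (\<Sum>a\<in>A. coeffs y a * M b a) = t b"
    using B_eB Mat_mult[OF y] by force
  then show thesis by (rule that)
qed

lemma bij_betw_functionals_lincomb:
  fixes f :: "'a \<Rightarrow> 'x \<Rightarrow> real" and L :: "'b \<Rightarrow> ('x \<Rightarrow> real) \<Rightarrow> real"
  assumes fin: "finite A" "finite B" and card: "card A = card B"
    and lin: "\<And>b c. b \<in> B \<Longrightarrow> L b (\<lambda>x. \<Sum>a\<in>A. c a * f a x) = (\<Sum>a\<in>A. c a * L b (f a))"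
    and kernel: "\<And>c. \<forall>b\<in>B. L b (\<lambda>x. \<Sum>a\<in>A. c a * f a x) = 0 \<Longrightarrow> \<forall>a\<in>A. c a = 0"
  shows "bij_betw (\<lambda>u. \<lambda>b\<in>B. L b u) {u. \<exists>c. u = (\<lambda>x. \<Sum>a\<in>A. c a * f a x)} (B \<rightarrow>\<^sub>E UNIV)"
proof (rule bij_betw_imageI)
  show "inj_on (\<lambda>u. \<lambda>b\<in>B. L b u) {u. \<exists>c. u = (\<lambda>x. \<Sum>a\<in>A. c a * f a x)}"
  proof (rule inj_onI, clarify)
    fix c c' assume eq: "(\<lambda>b\<in>B. L b (\<lambda>x. \<Sum>a\<in>A. c a * f a x)) = (\<lambda>b\<in>B. L b (\<lambda>x. \<Sum>a\<in>A. c' a * f a x))"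
    have "\<forall>b\<in>B. L b (\<lambda>x. \<Sum>a\<in>A. (c a - c' a) * f a x) = 0"
    proof
      fix b assume b: "b \<in> B"
      have "(\<Sum>a\<in>A. c a * L b (f a)) = (\<Sum>a\<in>A. c' a * L b (f a))"
        using fun_cong[OF eq, of b] b by (simp add: lin)
      then show "L b (\<lambda>x. \<Sum>a\<in>A. (c a - c' a) * f a x) = 0"
        by (simp only: lin[OF b]) (simp add: left_diff_distrib sum_subtractf)
    qed
    then have "\<forall>a\<in>A. c a - c' a = 0" by (rule kernel)
    then show "(\<lambda>x. \<Sum>a\<in>A. c a * f a x) = (\<lambda>x. \<Sum>a\<in>A. c' a * f a x)" by simp
  qed
  show "(\<lambda>u. \<lambda>b\<in>B. L b u) ` {u. \<exists>c. u = (\<lambda>x. \<Sum>a\<in>A. c a * f a x)} = B \<rightarrow>\<^sub>E UNIV"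
  proof
    show "(\<lambda>u. \<lambda>b\<in>B. L b u) ` {u. \<exists>c. u = (\<lambda>x. \<Sum>a\<in>A. c a * f a x)} \<subseteq> B \<rightarrow>\<^sub>E UNIV"
      by auto
    show "B \<rightarrow>\<^sub>E UNIV \<subseteq> (\<lambda>u. \<lambda>b\<in>B. L b u) ` {u. \<exists>c. u = (\<lambda>x. \<Sum>a\<in>A. c a * f a x)}"
    proof
      fix t :: "'b \<Rightarrow> real" assume t: "t \<in> B \<rightarrow>\<^sub>E UNIV"
      have "\<forall>a\<in>A. c a = 0" if "\<forall>b\<in>B. (\<Sum>a\<in>A. c a * L b (f a)) = 0" for c
        using that by (intro kernel) (simp add: lin)
      then obtain c where c: "\<forall>b\<in>B. (\<Sum>a\<in>A. c a * L b (f a)) = t b"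
        by (rule square_linear_system_solvable[OF fin card])
      have "(\<lambda>b\<in>B. L b (\<lambda>x. \<Sum>a\<in>A. c a * f a x)) = t"
        using t c by (auto simp: lin PiE_def extensional_def)
      then show "t \<in> (\<lambda>u. \<lambda>b\<in>B. L b u) ` {u. \<exists>c. u = (\<lambda>x. \<Sum>a\<in>A. c a * f a x)}"
        by blast
    qed
  qed
qed

definition bary_coords :: "nat \<Rightarrow> (nat \<Rightarrow> nat \<Rightarrow> real) \<Rightarrow> (nat \<Rightarrow> real) \<Rightarrow> (nat \<Rightarrow> real) \<Rightarrow> bool" where
  "bary_coords n v x c \<longleftrightarrow>
     (\<forall>l>n. c l = 0) \<and> (\<Sum>l\<le>n. c l) = 1 \<and> (\<forall>d<n. (\<Sum>l\<le>n. c l * v l d) = x d)"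

lemma simplex_verticesD:
  assumes "simplex_vertices n v" "(\<Sum>l\<le>n. c l) = 0" "\<forall>d<n. (\<Sum>l\<le>n. c l * v l d) = 0" "l \<le> n"
  shows "c l = 0"
  using assms unfolding simplex_vertices_def by blast

lemma bary_coords_unique:
  assumes s: "simplex_vertices n v" and c: "bary_coords n v x c" and c': "bary_coords n v x c'"
  shows "c = c'"
proof
  fix l
  have "c l - c' l = 0" if "l \<le> n"
    using c c' that
    by (intro simplex_verticesD[OF s, where c = "\<lambda>l. c l - c' l"])
      (auto simp: bary_coords_def sum_subtractf left_diff_distrib)
  then show "c l = c' l" using c c' by (cases "l \<le> n") (auto simp: bary_coords_def)
qed

lemma bary_coords_exists:
  assumes s: "simplex_vertices n v"
  obtains c where "bary_coords n v x c"
proof -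
  \<comment> \<open>Row 0 of the system is the normalisation, row d + 1 the d-th coordinate.\<close>
  define M where "M r l = (if r = 0 then 1 else v l (r - 1))" for r l
  define rhs where "rhs r = (if r = 0 then 1 else x (r - 1))" for r
  have "\<forall>l\<in>{..n}. c l = 0" if "\<forall>r\<in>{..n}. (\<Sum>l\<le>n. c l * M r l) = 0" for c
  proof -
    have "(\<Sum>l\<le>n. c l) = 0" using bspec[OF that, of 0] by (simp add: M_def)
    moreover have "(\<Sum>l\<le>n. c l * v l d) = 0" if "d < n" for d
      using bspec[OF \<open>\<forall>r\<in>{..n}. _\<close>, of "Suc d"] that by (simp add: M_def)
    ultimately show ?thesis using simplex_verticesD[OF s] by blast
  qed
  then obtain c where c: "\<forall>r\<in>{..n}. (\<Sum>l\<le>n. c l * M r l) = rhs r"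
    by (rule square_linear_system_solvable[OF finite_atMost finite_atMost refl])
  have "bary_coords n v x (\<lambda>l. if l \<le> n then c l else 0)"
    unfolding bary_coords_def
  proof (intro conjI allI impI)
    show "(\<Sum>l\<le>n. if l \<le> n then c l else 0) = 1"
      using bspec[OF c, of 0] by (simp add: M_def rhs_def)
    fix d assume "d < n"
    then show "(\<Sum>l\<le>n. (if l \<le> n then c l else 0) * v l d) = x d"
      using bspec[OF c, of "Suc d"] by (simp add: M_def rhs_def)
  qed simp
  then show thesis by (rule that)
qed

lemma bary_eqI:
  assumes s: "simplex_vertices n v" and c: "bary_coords n v x c"
  shows "bary n v j x = c j"
proof -
  have "(THE c. bary_coords n v x c) = c"
    using c bary_coords_unique[OF s _ c] by (rule the_equality)
  then show ?thesis unfolding bary_def bary_coords_def[symmetric] by simp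
qed

lemma bary_coords_bary:
  assumes s: "simplex_vertices n v"
  shows "bary_coords n v x (\<lambda>j. bary n v j x)"
proof -
  obtain c where c: "bary_coords n v x c" using bary_coords_exists[OF s] .
  moreover have "(\<lambda>j. bary n v j x) = c" using bary_eqI[OF s c] by auto
  ultimately show ?thesis by simp
qed

lemma if_1_0_mult: "(if P then 1 else 0) * y = (if P then y else (0::real))"
  by simp

lemma bary_vertex:
  assumes s: "simplex_vertices n v" and l: "l \<le> n"
  shows "bary n v j (v l) = (if j = l then 1 else 0)"
  using l by (intro bary_eqI[OF s]) (auto simp: bary_coords_def if_1_0_mult)

lemma bary_coords_from_unit_vectors:
  assumes c0: "bary_coords n v (\<lambda>_. 0) c0"
    and e: "\<And>d. bary_coords n v (\<lambda>d'. if d' = d then 1 else 0) (e d)"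
  shows "bary_coords n v x (\<lambda>j. c0 j + (\<Sum>d<n. (e d j - c0 j) * x d))"
proof -
  have swap: "(\<Sum>l\<le>n. \<Sum>d<n. g d l * x d) = (\<Sum>d<n. (\<Sum>l\<le>n. g d l) * x d)"
    for g :: "nat \<Rightarrow> nat \<Rightarrow> real"
    unfolding sum_distrib_right by (rule sum.swap)
  have "(\<Sum>l\<le>n. c0 l + (\<Sum>d<n. (e d l - c0 l) * x d))
      = (\<Sum>l\<le>n. c0 l) + (\<Sum>d<n. ((\<Sum>l\<le>n. e d l) - (\<Sum>l\<le>n. c0 l)) * x d)"
    by (simp only: sum.distrib swap sum_subtractf)
  also have "\<dots> = 1" using c0 e by (simp add: bary_coords_def)
  finally have sum_eq_1: "(\<Sum>l\<le>n. c0 l + (\<Sum>d<n. (e d l - c0 l) * x d)) = 1" .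
  have coord: "(\<Sum>l\<le>n. (c0 l + (\<Sum>d<n. (e d l - c0 l) * x d)) * v l d') = x d'" if d': "d' < n" for d'
  proof -
    have "(c0 l + (\<Sum>d<n. (e d l - c0 l) * x d)) * v l d'
        = c0 l * v l d' + (\<Sum>d<n. ((e d l - c0 l) * v l d') * x d)" for l
      by (simp add: algebra_simps sum_distrib_left)
    then have "(\<Sum>l\<le>n. (c0 l + (\<Sum>d<n. (e d l - c0 l) * x d)) * v l d')
        = (\<Sum>l\<le>n. c0 l * v l d') + (\<Sum>d<n. (\<Sum>l\<le>n. (e d l - c0 l) * v l d') * x d)"
      by (simp only: sum.distrib swap)
    also have "\<dots> = (\<Sum>d<n. (if d' = d then 1 else 0) * x d)"
    proof -
      have "(\<Sum>l\<le>n. e d l * v l d') = (if d' = d then 1 else 0)" for d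
        using e[of d] d' by (simp add: bary_coords_def)
      moreover have "(\<Sum>l\<le>n. c0 l * v l d') = 0" using c0 d' by (simp add: bary_coords_def)
      ultimately show ?thesis by (simp add: left_diff_distrib sum_subtractf)
    qed
    also have "\<dots> = x d'" using d' by (simp add: if_1_0_mult)
    finally show ?thesis .
  qed
  show ?thesis
    using c0 e sum_eq_1 coord by (simp add: bary_coords_def)
qed

lemma bary_affine:
  assumes s: "simplex_vertices n v"
  obtains a b where "\<And>x. bary n v j x = a + (\<Sum>d<n. b d * x d)"
proof -
  define c0 where "c0 = (\<lambda>j. bary n v j (\<lambda>_. 0))"
  define e where "e d = (\<lambda>j. bary n v j (\<lambda>d'. if d' = d then 1 else 0))" for d
  have "bary_coords n v x (\<lambda>j. c0 j + (\<Sum>d<n. (e d j - c0 j) * x d))" for x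
    unfolding c0_def e_def by (intro bary_coords_from_unit_vectors bary_coords_bary[OF s])
  then have "bary n v j x = c0 j + (\<Sum>d<n. (e d j - c0 j) * x d)" for x
    by (rule bary_eqI[OF s])
  then show thesis by (rule that)
qed

inductive polyfun :: "nat \<Rightarrow> ((nat \<Rightarrow> real) \<Rightarrow> real) \<Rightarrow> bool" for n where
  affine: "polyfun n (\<lambda>x. a + (\<Sum>d<n. b d * x d))"
| add: "polyfun n f \<Longrightarrow> polyfun n g \<Longrightarrow> polyfun n (\<lambda>x. f x + g x)"
| mult: "polyfun n f \<Longrightarrow> polyfun n g \<Longrightarrow> polyfun n (\<lambda>x. f x * g x)"

lemma polyfun_const: "polyfun n (\<lambda>x. a)"
  using polyfun.affine[of n a "\<lambda>_. 0"] by simp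

lemma polyfun_lincomb:
  "finite S \<Longrightarrow> (\<And>\<alpha>. \<alpha> \<in> S \<Longrightarrow> polyfun n (f \<alpha>)) \<Longrightarrow> polyfun n (\<lambda>x. \<Sum>\<alpha>\<in>S. c \<alpha> * f \<alpha> x)"
proof (induction S rule: finite_induct)
  case empty
  then show ?case using polyfun_const[of n 0] by simp
next
  case (insert a S)
  then show ?case by (auto intro!: polyfun.add polyfun.mult polyfun_const)
qed

lemma polyfun_power: "polyfun n f \<Longrightarrow> polyfun n (\<lambda>x. f x ^ a)"
proof (induction a)
  case 0
  then show ?case using polyfun_const by simp
next
  case (Suc a)
  then show ?case using polyfun.mult[of n f "\<lambda>x. f x ^ a"] by simp
qed

lemma polyfun_prod:
  "finite L \<Longrightarrow> (\<And>l. l \<in> L \<Longrightarrow> polyfun n (g l)) \<Longrightarrow> polyfun n (\<lambda>x. \<Prod>l\<in>L. g l x)"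
proof (induction L rule: finite_induct)
  case empty
  then show ?case using polyfun_const by simp
next
  case (insert a L)
  then show ?case using polyfun.mult[of n "g a" "\<lambda>x. \<Prod>l\<in>L. g l x"] by simp
qed

lemma polyfun_bary:
  assumes s: "simplex_vertices n v"
  shows "polyfun n (bary n v j)"
proof -
  obtain a b where "\<And>x. bary n v j x = a + (\<Sum>d<n. b d * x d)"
    using bary_affine[OF s, where j = j] by blast
  then have "bary n v j = (\<lambda>x. a + (\<Sum>d<n. b d * x d))" by auto
  then show ?thesis by (simp add: polyfun.affine)
qed

lemma polyfun_bary_monomial:
  assumes s: "simplex_vertices n v"
  shows "polyfun n (bary_monomial n v \<alpha>)"
  unfolding bary_monomial_def[abs_def]
  by (intro polyfun_prod polyfun_power polyfun_bary[OF s]) auto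

lemma affine_update_coordinate:
  fixes x :: "nat \<Rightarrow> real"
  shows "(\<lambda>t. a + (\<Sum>d'<n. b d' * (x(d := x d + t)) d')) =
   (\<lambda>t. (a + (\<Sum>d'<n. b d' * x d')) + (if d < n then b d else 0) * t)"
proof
  fix t :: real
  have "(\<Sum>d'<n. b d' * (x(d := x d + t)) d') = (\<Sum>d'<n. b d' * x d' + (if d' = d then b d * t else 0))"
    by (rule sum.cong) (auto simp: algebra_simps)
  then show "a + (\<Sum>d'<n. b d' * (x(d := x d + t)) d') = (a + (\<Sum>d'<n. b d' * x d')) + (if d < n then b d else 0) * t"
    by (simp add: sum.distrib)
qed

lemma partial_eqI:
  assumes "\<And>x. ((\<lambda>t. f (x(d := x d + t))) has_real_derivative f' x) (at 0)"
  shows "partial d f = f'"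
  using assms by (auto simp: partial_def fun_eq_iff intro: DERIV_imp_deriv)

lemma polyfun_has_partial_derivative:
  "polyfun n f \<Longrightarrow> \<exists>f'. polyfun n f' \<and> (\<forall>x. ((\<lambda>t. f (x(d := x d + t))) has_real_derivative f' x) (at 0))"
proof (induction rule: polyfun.induct)
  case (affine a b)
  have "((\<lambda>t. a + (\<Sum>d'<n. b d' * (x(d := x d + t)) d')) has_real_derivative (if d < n then b d else 0)) (at 0)"
    for x
    unfolding affine_update_coordinate by (auto intro!: derivative_eq_intros)
  then show ?case using polyfun_const by blast
next
  case (add f g)
  then obtain f' g' where "polyfun n f'" "polyfun n g'"
    and f': "\<And>x. ((\<lambda>t. f (x(d := x d + t))) has_real_derivative f' x) (at 0)"
    and g': "\<And>x. ((\<lambda>t. g (x(d := x d + t))) has_real_derivative g' x) (at 0)" by blast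
  then show ?case
    by (intro exI[of _ "\<lambda>x. f' x + g' x"] conjI allI polyfun.add DERIV_add f' g')
next
  case (mult f g)
  then obtain f' g' where "polyfun n f'" "polyfun n g'"
    and f': "\<And>x. ((\<lambda>t. f (x(d := x d + t))) has_real_derivative f' x) (at 0)"
    and g': "\<And>x. ((\<lambda>t. g (x(d := x d + t))) has_real_derivative g' x) (at 0)" by blast
  have "((\<lambda>t. f (x(d := x d + t)) * g (x(d := x d + t))) has_real_derivative f' x * g x + f x * g' x) (at 0)"
    for x using DERIV_mult[OF f'[of x] g'[of x]] by (simp add: mult.commute)
  with mult.hyps \<open>polyfun n f'\<close> \<open>polyfun n g'\<close> show ?case
    by (intro exI[of _ "\<lambda>x. f' x * g x + f x * g' x"] conjI allI polyfun.add polyfun.mult)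
qed

lemma
  assumes "polyfun n f"
  shows polyfun_partial: "polyfun n (partial d f)"
    and has_real_derivative_partial: "((\<lambda>t. f (x(d := x d + t))) has_real_derivative partial d f x) (at 0)"
proof -
  obtain f' where "polyfun n f'" and f': "\<forall>x. ((\<lambda>t. f (x(d := x d + t))) has_real_derivative f' x) (at 0)"
    using polyfun_has_partial_derivative[OF assms] by blast
  moreover have "partial d f = f'" using f' by (intro partial_eqI) auto
  ultimately show "polyfun n (partial d f)" "((\<lambda>t. f (x(d := x d + t))) has_real_derivative partial d f x) (at 0)"
    by auto
qed

lemma partial_lincomb:
  "polyfun n f \<Longrightarrow> polyfun n g \<Longrightarrow>
    partial d (\<lambda>x. a * f x + b * g x) = (\<lambda>x. a * partial d f x + b * partial d g x)"
  by (rule partial_eqI) (auto intro!: derivative_eq_intros has_real_derivative_partial)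

lemma partial_add:
  "polyfun n f \<Longrightarrow> polyfun n g \<Longrightarrow> partial d (\<lambda>x. f x + g x) = (\<lambda>x. partial d f x + partial d g x)"
  using partial_lincomb[of n f g d 1 1] by simp

lemma partial_mult:
  "polyfun n f \<Longrightarrow> polyfun n g \<Longrightarrow>
    partial d (\<lambda>x. f x * g x) = (\<lambda>x. partial d f x * g x + f x * partial d g x)"
  by (rule partial_eqI) (auto intro!: derivative_eq_intros has_real_derivative_partial)

lemma partial_affine:
  "partial d (\<lambda>x. a + (\<Sum>d'<n. b d' * x d')) = (\<lambda>x. if d < n then b d else 0)"
  by (rule partial_eqI) (unfold affine_update_coordinate, auto intro!: derivative_eq_intros)

lemma partial_const: "partial d (\<lambda>x. a) = (\<lambda>x. 0)"
  by (rule partial_eqI) (auto intro!: derivative_eq_intros)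

lemma partial_commute: "polyfun n f \<Longrightarrow> partial d (partial e f) = partial e (partial d f)"
proof (induction rule: polyfun.induct)
  case (affine a b)
  then show ?case by (simp add: partial_affine partial_const)
next
  case (add f g)
  then show ?case by (simp add: partial_add[of n] polyfun_partial)
next
  case (mult f g)
  have second: "partial d (partial e (\<lambda>x. f x * g x)) = (\<lambda>x.
      partial d (partial e f) x * g x + partial e f x * partial d g x +
      (partial d f x * partial e g x + f x * partial d (partial e g) x))"
    if "polyfun n f" "polyfun n g" for d e f g
    using that by (simp add: partial_mult[of n] partial_add[of n] polyfun_partial polyfun.mult)
  show ?case using second[OF mult.hyps, of d e] second[OF mult.hyps, of e d] mult.IH
    by (simp add: algebra_simps)
qed

definition poly_linear :: "nat \<Rightarrow> (((nat \<Rightarrow> real) \<Rightarrow> real) \<Rightarrow> (nat \<Rightarrow> real) \<Rightarrow> real) \<Rightarrow> bool" where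
  "poly_linear n T \<longleftrightarrow> (\<forall>f. polyfun n f \<longrightarrow> polyfun n (T f)) \<and>
     (\<forall>f g a b. polyfun n f \<longrightarrow> polyfun n g \<longrightarrow>
        T (\<lambda>x. a * f x + b * g x) = (\<lambda>x. a * T f x + b * T g x))"

lemma poly_linearI:
  assumes "\<And>f. polyfun n f \<Longrightarrow> polyfun n (T f)"
    and "\<And>f g a b. polyfun n f \<Longrightarrow> polyfun n g \<Longrightarrow>
      T (\<lambda>x. a * f x + b * g x) = (\<lambda>x. a * T f x + b * T g x)"
  shows "poly_linear n T"
  using assms by (simp add: poly_linear_def)

lemma
  assumes "poly_linear n T" "polyfun n f"
  shows poly_linear_polyfun: "polyfun n (T f)"
    and poly_linear_lincomb: "polyfun n g \<Longrightarrow> T (\<lambda>x. a * f x + b * g x) = (\<lambda>x. a * T f x + b * T g x)"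
  using assms by (simp_all add: poly_linear_def)

lemma poly_linear_id: "poly_linear n id"
  by (rule poly_linearI) simp_all

lemma poly_linear_compose:
  assumes S: "poly_linear n S" and T: "poly_linear n T"
  shows "poly_linear n (S \<circ> T)"
  by (rule poly_linearI)
    (simp_all add: poly_linear_polyfun[OF S] poly_linear_polyfun[OF T]
      poly_linear_lincomb[OF T] poly_linear_lincomb[OF S])

lemma poly_linear_funpow: "poly_linear n T \<Longrightarrow> poly_linear n (T ^^ k)"
  by (induction k) (simp_all add: poly_linear_id poly_linear_compose)

lemma poly_linear_sum:
  assumes T: "poly_linear n T"
  shows "finite S \<Longrightarrow> (\<And>\<alpha>. \<alpha> \<in> S \<Longrightarrow> polyfun n (f \<alpha>)) \<Longrightarrow>
    T (\<lambda>x. \<Sum>\<alpha>\<in>S. c \<alpha> * f \<alpha> x) = (\<lambda>x. \<Sum>\<alpha>\<in>S. c \<alpha> * T (f \<alpha>) x)"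
proof (induction S rule: finite_induct)
  case empty
  have "T (\<lambda>x. 0 * 0 + 0 * 0) = (\<lambda>x. 0 * T (\<lambda>x. 0) x + 0 * T (\<lambda>x. 0) x)"
    by (rule poly_linear_lincomb[OF T polyfun_const polyfun_const])
  then show ?case by simp
next
  case (insert a S)
  have "polyfun n (\<lambda>x. \<Sum>\<alpha>\<in>S. c \<alpha> * f \<alpha> x)" using insert by (intro polyfun_lincomb) auto
  then have "T (\<lambda>x. c a * f a x + 1 * (\<Sum>\<alpha>\<in>S. c \<alpha> * f \<alpha> x))
      = (\<lambda>x. c a * T (f a) x + 1 * T (\<lambda>x. \<Sum>\<alpha>\<in>S. c \<alpha> * f \<alpha> x) x)"
    using insert.prems by (intro poly_linear_lincomb[OF T]) auto
  then show ?case using insert by simp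
qed

lemma poly_linear_partial: "poly_linear n (partial d)"
  by (rule poly_linearI) (simp_all add: polyfun_partial partial_lincomb[of n])

lemma poly_linear_foldr_partial: "poly_linear n (foldr (\<lambda>d f. (partial d ^^ \<beta> d) f) ds)"
proof (induction ds)
  case Nil
  show ?case unfolding foldr.simps by (rule poly_linear_id)
next
  case (Cons d ds)
  show ?case unfolding foldr.simps
    by (intro poly_linear_compose poly_linear_funpow poly_linear_partial Cons.IH)
qed

lemma poly_linear_Dmulti: "poly_linear n (Dmulti n \<beta>)"
  unfolding Dmulti_def[abs_def] by (rule poly_linear_foldr_partial)

lemma Dmulti_zero_index: "Dmulti n (\<lambda>_. 0) f = f"
proof -
  have "foldr (\<lambda>d f. (partial d ^^ (\<lambda>_. 0::nat) d) f) ds f = f" for ds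
    by (induction ds) auto
  then show ?thesis unfolding Dmulti_def .
qed

lemma partial_commute_foldr:
  assumes f: "polyfun n f"
  shows "partial d (foldr (\<lambda>d f. (partial d ^^ \<beta> d) f) ds f)
    = foldr (\<lambda>d f. (partial d ^^ \<beta> d) f) ds (partial d f)"
proof -
  have partial_funpow: "partial d ((partial e ^^ k) g) = (partial e ^^ k) (partial d g)"
    if g: "polyfun n g" for e k g
  proof (induction k)
    case (Suc k)
    have "polyfun n ((partial e ^^ k) g)"
      by (rule poly_linear_polyfun[OF poly_linear_funpow[OF poly_linear_partial] g])
    then show ?case using partial_commute[of n _ d e] Suc.IH by simp
  qed simp
  show ?thesis
    by (induction ds)
      (simp_all add: partial_funpow poly_linear_polyfun[OF poly_linear_foldr_partial f])
qed

lemma Dmulti_partial: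
  assumes f: "polyfun n f" and d: "d < n"
  shows "Dmulti n \<beta> (partial d f) = Dmulti n (\<beta>(d := Suc (\<beta> d))) f"
proof -
  let ?F = "\<lambda>\<gamma> d f. (partial d ^^ \<gamma> d) f"
  let ?\<beta>' = "\<beta>(d := Suc (\<beta> d))"
  have split: "[0..<n] = [0..<d] @ d # [Suc d..<n]"
    using d upt_add_eq_append[of 0 d "n - d"] upt_conv_Cons[of d n] by simp
  have same: "foldr (\<lambda>e f. (partial e ^^ (if e = d then Suc (\<beta> d) else \<beta> e)) f) ds g = foldr (?F \<beta>) ds g"
    if "d \<notin> set ds" for ds g
    using that by (intro foldr_cong) auto
  have "Dmulti n ?\<beta>' f = foldr (?F \<beta>) [0..<d] (partial d ((partial d ^^ \<beta> d) (foldr (?F \<beta>) [Suc d..<n] f)))"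
    unfolding Dmulti_def split by (simp add: same)
  also have "\<dots> = foldr (?F \<beta>) [0..<d] ((partial d ^^ \<beta> d) (partial d (foldr (?F \<beta>) [Suc d..<n] f)))"
    by (simp only: funpow_swap1)
  also have "\<dots> = Dmulti n \<beta> (partial d f)"
    unfolding Dmulti_def split by (simp add: partial_commute_foldr[OF f])
  finally show ?thesis by simp
qed

definition deriv_along :: "nat \<Rightarrow> (nat \<Rightarrow> real) \<Rightarrow> ((nat \<Rightarrow> real) \<Rightarrow> real) \<Rightarrow> (nat \<Rightarrow> real) \<Rightarrow> real" where
  "deriv_along n w f = (\<lambda>x. \<Sum>d<n. w d * partial d f x)"

primrec derivs_along :: "nat \<Rightarrow> (nat \<Rightarrow> real) list \<Rightarrow> ((nat \<Rightarrow> real) \<Rightarrow> real) \<Rightarrow> (nat \<Rightarrow> real) \<Rightarrow> real" where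
  "derivs_along n [] f = f"
| "derivs_along n (w # ws) f = derivs_along n ws (deriv_along n w f)"

lemma poly_linear_deriv_along: "poly_linear n (deriv_along n w)"
  unfolding deriv_along_def
  by (rule poly_linearI)
    (auto intro!: polyfun_lincomb polyfun_partial
      simp: partial_lincomb[of n] sum.distrib sum_distrib_left algebra_simps)

lemma poly_linear_derivs_along: "poly_linear n (derivs_along n ws)"
proof (induction ws)
  case Nil
  have "derivs_along n [] = id" by auto
  then show ?case using poly_linear_id by metis
next
  case (Cons w ws)
  have "derivs_along n (w # ws) = derivs_along n ws \<circ> deriv_along n w" by auto
  then show ?case using poly_linear_compose[OF Cons.IH poly_linear_deriv_along] by metis
qed

lemma Dmulti_deriv_along:
  assumes f: "polyfun n f"
  shows "Dmulti n \<beta> (deriv_along n w f) = (\<lambda>x. \<Sum>d<n. w d * Dmulti n (\<beta>(d := Suc (\<beta> d))) f x)"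
  unfolding deriv_along_def
  by (simp add: poly_linear_sum[OF poly_linear_Dmulti] polyfun_partial[OF f] Dmulti_partial[OF f])

lemma Bset_increment:
  assumes "\<beta> \<in> Bset n r" "d < n"
  shows "\<beta>(d := Suc (\<beta> d)) \<in> Bset n (Suc r)"
proof -
  have "(\<Sum>d'<n. (\<beta>(d := Suc (\<beta> d))) d') = (\<Sum>d'<n. \<beta> d' + (if d' = d then 1 else 0))"
    by (rule sum.cong) auto
  also have "\<dots> = (\<Sum>d'<n. \<beta> d') + 1" using assms(2) by (simp add: sum.distrib)
  finally show ?thesis using assms by (auto simp: Bset_def)
qed

lemma derivs_along_eq_0_if_jet_eq_0:
  "polyfun n f \<Longrightarrow> \<forall>\<beta>\<in>Bset n r. Dmulti n \<beta> f p = 0 \<Longrightarrow> length ws \<le> r \<Longrightarrow> derivs_along n ws f p = 0"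
proof (induction ws arbitrary: f r)
  case Nil
  have "(\<lambda>_. 0) \<in> Bset n r" by (simp add: Bset_def)
  then show ?case using Nil Dmulti_zero_index[of n f] by force
next
  case (Cons w ws)
  then obtain r' where r: "r = Suc r'" by (cases r) auto
  have "\<forall>\<beta>\<in>Bset n r'. Dmulti n \<beta> (deriv_along n w f) p = 0"
    using Cons.prems Bset_increment r by (auto simp: Dmulti_deriv_along)
  then show ?case
    using Cons.IH[of "deriv_along n w f" r'] Cons.prems r poly_linear_polyfun[OF poly_linear_deriv_along]
    by auto
qed

lemma deriv_along_mult:
  "polyfun n f \<Longrightarrow> polyfun n g \<Longrightarrow>
    deriv_along n w (\<lambda>x. f x * g x) = (\<lambda>x. deriv_along n w f x * g x + f x * deriv_along n w g x)"
  unfolding deriv_along_def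
  by (simp add: partial_mult[of n] sum.distrib sum_distrib_left sum_distrib_right algebra_simps)

lemma deriv_along_const: "deriv_along n w (\<lambda>x. a) = (\<lambda>x. 0)"
  unfolding deriv_along_def by (simp add: partial_const)

lemma deriv_along_power:
  assumes f: "polyfun n f"
  shows "deriv_along n w (\<lambda>x. f x ^ a) = (\<lambda>x. of_nat a * f x ^ (a - 1) * deriv_along n w f x)"
proof (induction a)
  case 0
  then show ?case by (simp add: deriv_along_const)
next
  case (Suc a)
  have "deriv_along n w (\<lambda>x. f x ^ Suc a) = (\<lambda>x. deriv_along n w f x * f x ^ a + f x * deriv_along n w (\<lambda>x. f x ^ a) x)"
    using deriv_along_mult[OF f polyfun_power[OF f]] by simp
  then show ?case unfolding Suc.IH by (cases a) (auto simp: algebra_simps)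
qed

lemma deriv_along_prod:
  "finite L \<Longrightarrow> (\<And>l. l \<in> L \<Longrightarrow> polyfun n (g l)) \<Longrightarrow>
    deriv_along n w (\<lambda>x. \<Prod>l\<in>L. g l x) = (\<lambda>x. \<Sum>l\<in>L. deriv_along n w (g l) x * (\<Prod>l'\<in>L - {l}. g l' x))"
proof (induction L rule: finite_induct)
  case empty
  then show ?case by (simp add: deriv_along_const)
next
  case (insert a L)
  have "polyfun n (\<lambda>x. \<Prod>l\<in>L. g l x)" using insert by (auto intro!: polyfun_prod)
  then have "deriv_along n w (\<lambda>x. \<Prod>l\<in>insert a L. g l x)
      = (\<lambda>x. deriv_along n w (g a) x * (\<Prod>l\<in>L. g l x) + g a x * deriv_along n w (\<lambda>x. \<Prod>l\<in>L. g l x) x)"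
    using insert deriv_along_mult[of n "g a" "\<lambda>x. \<Prod>l\<in>L. g l x"] by simp
  moreover have "insert a L - {l} = insert a (L - {l})" if "l \<in> L" for l
    using that insert by auto
  moreover have "insert a L - {a} = L" using insert by auto
  ultimately show ?case
    using insert by (simp add: sum_distrib_left algebra_simps cong: sum.cong)
qed

definition edge :: "(nat \<Rightarrow> nat \<Rightarrow> real) \<Rightarrow> nat \<Rightarrow> nat \<Rightarrow> nat \<Rightarrow> real" where
  "edge v i j = (\<lambda>d. v j d - v i d)"

lemma deriv_along_edge_bary:
  assumes s: "simplex_vertices n v" and i: "i \<le> n" and j: "j \<le> n"
  shows "deriv_along n (edge v i j) (bary n v l) = (\<lambda>x. (if l = j then 1 else 0) - (if l = i then 1 else 0))"
proof -
  obtain a b where ab: "\<And>x. bary n v l x = a + (\<Sum>d<n. b d * x d)"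
    using bary_affine[OF s, where j = l] by blast
  then have "bary n v l = (\<lambda>x. a + (\<Sum>d<n. b d * x d))" by auto
  then have "deriv_along n (edge v i j) (bary n v l) = (\<lambda>x. \<Sum>d<n. edge v i j d * b d)"
    by (simp add: deriv_along_def partial_affine)
  also have "(\<Sum>d<n. edge v i j d * b d) = bary n v l (v j) - bary n v l (v i)"
    by (simp add: ab edge_def sum_subtractf algebra_simps)
  also have "\<dots> = (if l = j then 1 else 0) - (if l = i then 1 else 0)"
    using bary_vertex[OF s i] bary_vertex[OF s j] by simp
  finally show ?thesis .
qed

lemma bary_monomial_update:
  assumes l: "l \<le> n"
  shows "bary_monomial n v (\<alpha>(l := a)) x = bary n v l x ^ a * (\<Prod>l'\<in>{..n} - {l}. bary n v l' x ^ \<alpha> l')"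
proof -
  have "(\<Prod>l'\<in>{..n} - {l}. bary n v l' x ^ (\<alpha>(l := a)) l') = (\<Prod>l'\<in>{..n} - {l}. bary n v l' x ^ \<alpha> l')"
    by (rule prod.cong) auto
  then show ?thesis
    unfolding bary_monomial_def using l by (subst prod.remove[of _ l]) auto
qed

lemma deriv_along_edge_bary_monomial:
  assumes s: "simplex_vertices n v" and i: "i \<le> n" and j: "j \<le> n" and ji: "j \<noteq> i"
  shows "deriv_along n (edge v i j) (bary_monomial n v \<alpha>) =
    (\<lambda>x. real (\<alpha> j) * bary_monomial n v (\<alpha>(j := \<alpha> j - 1)) x
       - real (\<alpha> i) * bary_monomial n v (\<alpha>(i := \<alpha> i - 1)) x)"
proof
  fix x
  define T where "T l = real (\<alpha> l) * bary n v l x ^ (\<alpha> l - 1) * (\<Prod>l'\<in>{..n} - {l}. bary n v l' x ^ \<alpha> l')" for l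
  have "deriv_along n (edge v i j) (bary_monomial n v \<alpha>) x =
      (\<Sum>l\<le>n. deriv_along n (edge v i j) (\<lambda>x. bary n v l x ^ \<alpha> l) x * (\<Prod>l'\<in>{..n} - {l}. bary n v l' x ^ \<alpha> l'))"
    unfolding bary_monomial_def[abs_def]
    by (subst deriv_along_prod) (auto intro!: polyfun_power polyfun_bary[OF s])
  also have "\<dots> = (\<Sum>l\<le>n. (if l = j then T l else 0) - (if l = i then T l else 0))"
    by (rule sum.cong)
      (auto simp: deriv_along_power[OF polyfun_bary[OF s]] deriv_along_edge_bary[OF s i j] T_def ji)
  also have "\<dots> = T j - T i" using i j by (simp add: sum_subtractf)
  also have "\<dots> = real (\<alpha> j) * bary_monomial n v (\<alpha>(j := \<alpha> j - 1)) x
      - real (\<alpha> i) * bary_monomial n v (\<alpha>(i := \<alpha> i - 1)) x"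
    unfolding T_def bary_monomial_update[OF i] bary_monomial_update[OF j] by simp
  finally show "deriv_along n (edge v i j) (bary_monomial n v \<alpha>) x = \<dots>" .
qed

lemma derivs_along_edge_bary_monomial:
  assumes s: "simplex_vertices n v" and i: "i \<le> n" and j: "j \<le> n" and ji: "j \<noteq> i"
  shows "derivs_along n (edge v i j # ws) (bary_monomial n v \<alpha>) x =
    real (\<alpha> j) * derivs_along n ws (bary_monomial n v (\<alpha>(j := \<alpha> j - 1))) x
    - real (\<alpha> i) * derivs_along n ws (bary_monomial n v (\<alpha>(i := \<alpha> i - 1))) x"
proof -
  let ?M = "\<lambda>\<gamma>. bary_monomial n v \<gamma>"
  have "derivs_along n (edge v i j # ws) (?M \<alpha>)
      = derivs_along n ws (\<lambda>x. real (\<alpha> j) * ?M (\<alpha>(j := \<alpha> j - 1)) x + (- real (\<alpha> i)) * ?M (\<alpha>(i := \<alpha> i - 1)) x)"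
    by (simp add: deriv_along_edge_bary_monomial[OF s i j ji])
  also have "\<dots> = (\<lambda>x. real (\<alpha> j) * derivs_along n ws (?M (\<alpha>(j := \<alpha> j - 1))) x
      + (- real (\<alpha> i)) * derivs_along n ws (?M (\<alpha>(i := \<alpha> i - 1))) x)"
    by (intro poly_linear_lincomb[OF poly_linear_derivs_along] polyfun_bary_monomial[OF s])
  finally show ?thesis by simp
qed

lemma derivs_along_bary_monomial_at_vertex_eq_0:
  assumes s: "simplex_vertices n v" and i: "i \<le> n"
  shows "set js \<subseteq> {..n} - {i} \<Longrightarrow> l \<in> {..n} - {i} \<Longrightarrow> count (mset js) l < \<alpha> l \<Longrightarrow>
    derivs_along n (map (edge v i) js) (bary_monomial n v \<alpha>) (v i) = 0"
proof (induction js arbitrary: \<alpha>)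
  case Nil
  have "bary n v l (v i) ^ \<alpha> l = 0" using Nil bary_vertex[OF s i] by simp
  then show ?case using Nil by (auto simp: bary_monomial_def intro!: prod_zero)
next
  case (Cons j js)
  have j: "j \<le> n" "j \<noteq> i" using Cons.prems by auto
  have "derivs_along n (map (edge v i) js) (bary_monomial n v (\<alpha>(j := \<alpha> j - 1))) (v i) = 0"
    and "derivs_along n (map (edge v i) js) (bary_monomial n v (\<alpha>(i := \<alpha> i - 1))) (v i) = 0"
    using Cons.prems by (intro Cons.IH; auto split: if_splits)+
  then show ?case using derivs_along_edge_bary_monomial[OF s i j, where ws = "map (edge v i) js" and \<alpha> = \<alpha>] by simp
qed

lemma derivs_along_bary_monomial_at_vertex:
  assumes s: "simplex_vertices n v" and i: "i \<le> n"
  shows "set js \<subseteq> {..n} - {i} \<Longrightarrow> \<forall>l\<in>{..n} - {i}. count (mset js) l = \<alpha> l \<Longrightarrow>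
    derivs_along n (map (edge v i) js) (bary_monomial n v \<alpha>) (v i) = (\<Prod>l\<in>{..n} - {i}. fact (\<alpha> l))"
proof (induction js arbitrary: \<alpha>)
  case Nil
  have "bary_monomial n v \<alpha> (v i) = 1"
    unfolding bary_monomial_def using Nil bary_vertex[OF s i] by (intro prod.neutral) auto
  moreover have "(\<Prod>l\<in>{..n} - {i}. fact (\<alpha> l) :: real) = 1"
    using Nil by (intro prod.neutral) auto
  ultimately show ?case by simp
next
  case (Cons j js)
  have j: "j \<in> {..n} - {i}" using Cons.prems by auto
  have \<alpha>j: "\<alpha> j = Suc (count (mset js) j)" using bspec[OF Cons.prems(2) j] by simp
  have "derivs_along n (map (edge v i) js) (bary_monomial n v (\<alpha>(i := \<alpha> i - 1))) (v i) = 0"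
    using Cons.prems \<alpha>j j by (intro derivs_along_bary_monomial_at_vertex_eq_0[OF s i, of js j]) auto
  moreover have "derivs_along n (map (edge v i) js) (bary_monomial n v (\<alpha>(j := \<alpha> j - 1))) (v i)
      = (\<Prod>l\<in>{..n} - {i}. fact ((\<alpha>(j := \<alpha> j - 1)) l))"
    using Cons.prems \<alpha>j by (intro Cons.IH) (auto split: if_splits)
  moreover have "real (\<alpha> j) * (\<Prod>l\<in>{..n} - {i}. fact ((\<alpha>(j := \<alpha> j - 1)) l)) = (\<Prod>l\<in>{..n} - {i}. fact (\<alpha> l))"
  proof -
    have "(\<Prod>l\<in>{..n} - {i} - {j}. fact ((\<alpha>(j := \<alpha> j - 1)) l)) = (\<Prod>l\<in>{..n} - {i} - {j}. (fact (\<alpha> l) :: real))"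
      by (rule prod.cong) auto
    moreover have "real (\<alpha> j) * fact (\<alpha> j - 1) = fact (\<alpha> j)"
      using \<alpha>j by (simp add: fact_reduce[of "\<alpha> j"])
    ultimately show ?thesis
      using j by (simp add: prod.remove[of _ j] mult.assoc[symmetric])
  qed
  ultimately show ?case
    using j derivs_along_edge_bary_monomial[OF s i, of j "map (edge v i) js" \<alpha>] by simp
qed

definition vanishing_order :: "nat \<Rightarrow> nat \<Rightarrow> (nat \<Rightarrow> nat) \<Rightarrow> nat" where
  "vanishing_order n i \<alpha> = (\<Sum>j\<in>{..n} - {i}. \<alpha> j)"

definition near_vertex_indices :: "nat \<Rightarrow> nat \<Rightarrow> nat \<Rightarrow> nat \<Rightarrow> (nat \<Rightarrow> nat) set" where
  "near_vertex_indices n k i m = {\<alpha> \<in> Tset n k. vanishing_order n i \<alpha> \<le> m}"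

lemma PkD_eq:
  "PkD n v k i m = {u. \<exists>c. u = (\<lambda>x. \<Sum>\<alpha>\<in>near_vertex_indices n k i m. c \<alpha> * bary_monomial n v \<alpha> x)}"
  by (simp add: PkD_def near_vertex_indices_def vanishing_order_def)

lemma Tset_vertex_plus_vanishing_order:
  assumes "\<alpha> \<in> Tset n k" "i \<le> n"
  shows "\<alpha> i + vanishing_order n i \<alpha> = k"
  using assms by (simp add: Tset_def vanishing_order_def sum.remove[of "{..n}" i])

lemma Tset_eq_if_le_off_vertex:
  assumes \<alpha>: "\<alpha> \<in> Tset n k" and \<gamma>: "\<gamma> \<in> Tset n k" and i: "i \<le> n"
    and le: "\<forall>l\<in>{..n} - {i}. \<alpha> l \<le> \<gamma> l"
    and order: "vanishing_order n i \<gamma> \<le> vanishing_order n i \<alpha>"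
  shows "\<alpha> = \<gamma>"
proof -
  have off: "\<alpha> l = \<gamma> l" if "l \<in> {..n} - {i}" for l
  proof (rule ccontr)
    assume "\<alpha> l \<noteq> \<gamma> l"
    with le that have "\<exists>l\<in>{..n} - {i}. \<alpha> l < \<gamma> l" by force
    then have "vanishing_order n i \<alpha> < vanishing_order n i \<gamma>"
      unfolding vanishing_order_def using le by (intro sum_strict_mono_ex1) auto
    with order show False by simp
  qed
  then have "vanishing_order n i \<alpha> = vanishing_order n i \<gamma>"
    unfolding vanishing_order_def by (intro sum.cong) auto
  then have "\<alpha> i = \<gamma> i"
    using Tset_vertex_plus_vanishing_order[OF \<alpha> i] Tset_vertex_plus_vanishing_order[OF \<gamma> i] by simp
  moreover have "\<alpha> l = \<gamma> l" if "l > n" for l using \<alpha> \<gamma> that by (simp add: Tset_def)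
  ultimately show ?thesis using off by (metis Diff_iff atMost_iff ext not_le singletonD)
qed

lemma list_with_counts:
  assumes "finite L"
  obtains js where "set js \<subseteq> L" "\<forall>l\<in>L. count (mset js) l = a l" "length js = (\<Sum>l\<in>L. a l)"
proof -
  define M where "M = (\<Sum>l\<in>L. replicate_mset (a l) l)"
  obtain js where js: "mset js = M" using ex_mset by blast
  have count: "count M l = (if l \<in> L then a l else 0)" for l
    using assms by (simp add: M_def count_sum)
  show thesis
  proof
    show "set js \<subseteq> L"
    proof
      fix l assume "l \<in> set js"
      then have "count M l > 0" by (simp flip: js)
      then show "l \<in> L" using count[of l] by (simp split: if_splits)
    qed
    show "\<forall>l\<in>L. count (mset js) l = a l" using count js by simp
    show "length js = (\<Sum>l\<in>L. a l)" by (simp flip: size_mset add: js M_def size_multiset_sum)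
  qed
qed

lemma bary_monomial_coeffs_eq_0_if_jet_at_vertex_eq_0:
  assumes s: "simplex_vertices n v" and i: "i \<le> n"
    and I: "finite I" "I \<subseteq> near_vertex_indices n k i m"
    and jet: "\<forall>\<beta>\<in>Bset n m. Dmulti n \<beta> (\<lambda>x. \<Sum>\<alpha>\<in>I. c \<alpha> * bary_monomial n v \<alpha> x) (v i) = 0"
  shows "\<forall>\<alpha>\<in>I. c \<alpha> = 0"
proof (rule ccontr)
  assume "\<not> (\<forall>\<alpha>\<in>I. c \<alpha> = 0)"
  then obtain a where a: "a \<in> I" "c a \<noteq> 0"
    and a_min: "\<And>\<alpha>. \<alpha> \<in> I \<Longrightarrow> c \<alpha> \<noteq> 0 \<Longrightarrow> vanishing_order n i a \<le> vanishing_order n i \<alpha>"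
    using ex_has_least_nat[of "\<lambda>\<alpha>. \<alpha> \<in> I \<and> c \<alpha> \<noteq> 0" _ "vanishing_order n i"] by blast
  obtain js where js: "set js \<subseteq> {..n} - {i}" "\<forall>l\<in>{..n} - {i}. count (mset js) l = a l"
    and len: "length js = vanishing_order n i a"
    using list_with_counts[of "{..n} - {i}" a] unfolding vanishing_order_def by blast
  let ?E = "\<lambda>\<alpha>. derivs_along n (map (edge v i) js) (bary_monomial n v \<alpha>) (v i)"
  have mono: "polyfun n (bary_monomial n v \<alpha>)" for \<alpha> by (rule polyfun_bary_monomial[OF s])
  \<comment> \<open>Differentiating a l times along v l - v i for each l \<noteq> i kills, at v i, every
    monomial of vanishing order at least that of a except the one of a itself.\<close>
  have others: "c \<alpha> * ?E \<alpha> = 0" if \<alpha>: "\<alpha> \<in> I - {a}" for \<alpha>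
  proof (cases "c \<alpha> = 0")
    case False
    show ?thesis
    proof (cases "\<exists>l\<in>{..n} - {i}. count (mset js) l < \<alpha> l")
      case True
      then show ?thesis using derivs_along_bary_monomial_at_vertex_eq_0[OF s i js(1)] by auto
    next
      case False
      then have "\<forall>l\<in>{..n} - {i}. \<alpha> l \<le> a l" using js(2) by (auto simp: not_less)
      then have "\<alpha> = a"
        using \<alpha> a I a_min[of \<alpha>] \<open>c \<alpha> \<noteq> 0\<close>
        by (intro Tset_eq_if_le_off_vertex[OF _ _ i]) (auto simp: near_vertex_indices_def)
      with \<alpha> show ?thesis by simp
    qed
  qed simp
  have "derivs_along n (map (edge v i) js) (\<lambda>x. \<Sum>\<alpha>\<in>I. c \<alpha> * bary_monomial n v \<alpha> x) (v i) = 0"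
    using a I jet len
    by (intro derivs_along_eq_0_if_jet_eq_0 polyfun_lincomb mono) (auto simp: near_vertex_indices_def)
  moreover have "derivs_along n (map (edge v i) js) (\<lambda>x. \<Sum>\<alpha>\<in>I. c \<alpha> * bary_monomial n v \<alpha> x) (v i)
      = (\<Sum>\<alpha>\<in>I. c \<alpha> * ?E \<alpha>)"
    by (simp add: poly_linear_sum[OF poly_linear_derivs_along I(1) mono])
  moreover have "(\<Sum>\<alpha>\<in>I. c \<alpha> * ?E \<alpha>) = c a * ?E a"
    using I(1) a(1) others by (simp add: sum.remove[of I a] sum.neutral)
  moreover have "?E a = (\<Prod>l\<in>{..n} - {i}. fact (a l))"
    by (rule derivs_along_bary_monomial_at_vertex[OF s i js])
  ultimately show False using a(2) by simp
qed

lemma finite_Bset: "finite (Bset n m)"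
proof (rule finite_subset)
  show "Bset n m \<subseteq> {\<beta>. \<forall>d. (d \<in> {..<n} \<longrightarrow> \<beta> d \<in> {..m}) \<and> (d \<notin> {..<n} \<longrightarrow> \<beta> d = 0)}"
  proof clarify
    fix \<beta> d assume \<beta>: "\<beta> \<in> Bset n m"
    have "\<beta> d \<le> m" if "d < n"
      using \<beta> member_le_sum[of d "{..<n}" \<beta>] that by (simp add: Bset_def)
    with \<beta> show "(d \<in> {..<n} \<longrightarrow> \<beta> d \<in> {..m}) \<and> (d \<notin> {..<n} \<longrightarrow> \<beta> d = 0)"
      by (simp add: Bset_def)
  qed
qed (intro finite_set_of_finite_funs; simp)

definition skip_index :: "nat \<Rightarrow> nat \<Rightarrow> nat" where
  "skip_index i d = (if d < i then d else Suc d)"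

lemma bij_betw_skip_index:
  assumes i: "i \<le> n"
  shows "bij_betw (skip_index i) {..<n} ({..n} - {i})"
proof (rule bij_betw_byWitness[where f' = "\<lambda>j. if j < i then j else j - 1"])
  show "skip_index i ` {..<n} \<subseteq> {..n} - {i}" by (auto simp: skip_index_def)
qed (use i in \<open>auto simp: skip_index_def\<close>)

lemma vanishing_order_skip_index:
  "i \<le> n \<Longrightarrow> vanishing_order n i \<alpha> = (\<Sum>d<n. \<alpha> (skip_index i d))"
  unfolding vanishing_order_def using sum.reindex_bij_betw[OF bij_betw_skip_index] by metis

definition Bset_to_Tset :: "nat \<Rightarrow> nat \<Rightarrow> nat \<Rightarrow> (nat \<Rightarrow> nat) \<Rightarrow> nat \<Rightarrow> nat" where
  "Bset_to_Tset n k i \<beta> = (\<lambda>j. if j > n then 0 else if j = i then k - (\<Sum>d<n. \<beta> d)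
     else \<beta> (if j < i then j else j - 1))"

definition Tset_to_Bset :: "nat \<Rightarrow> nat \<Rightarrow> (nat \<Rightarrow> nat) \<Rightarrow> nat \<Rightarrow> nat" where
  "Tset_to_Bset n i \<alpha> = (\<lambda>d. if d < n then \<alpha> (skip_index i d) else 0)"

lemma bij_betw_Bset_near_vertex_indices:
  assumes i: "i \<le> n" and mk: "m \<le> k"
  shows "bij_betw (Bset_to_Tset n k i) (Bset n m) (near_vertex_indices n k i m)"
proof (rule bij_betw_byWitness[where f' = "Tset_to_Bset n i"])
  have skip: "Bset_to_Tset n k i \<beta> (skip_index i d) = \<beta> d" if "d < n" for \<beta> d
    using that i by (auto simp: Bset_to_Tset_def skip_index_def)
  have order: "vanishing_order n i (Bset_to_Tset n k i \<beta>) = (\<Sum>d<n. \<beta> d)" for \<beta>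
    by (simp add: vanishing_order_skip_index[OF i] skip)
  show "\<forall>\<beta>\<in>Bset n m. Tset_to_Bset n i (Bset_to_Tset n k i \<beta>) = \<beta>"
    by (auto simp: Tset_to_Bset_def skip Bset_def)
  show "\<forall>\<alpha>\<in>near_vertex_indices n k i m. Bset_to_Tset n k i (Tset_to_Bset n i \<alpha>) = \<alpha>"
  proof (intro ballI ext)
    fix \<alpha> j assume \<alpha>: "\<alpha> \<in> near_vertex_indices n k i m"
    then have "\<alpha> \<in> Tset n k" by (simp add: near_vertex_indices_def)
    moreover have "(\<Sum>d<n. Tset_to_Bset n i \<alpha> d) = vanishing_order n i \<alpha>"
      by (simp add: Tset_to_Bset_def vanishing_order_skip_index[OF i])
    ultimately show "Bset_to_Tset n k i (Tset_to_Bset n i \<alpha>) j = \<alpha> j"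
      using Tset_vertex_plus_vanishing_order[OF _ i, of \<alpha> k] i
      by (auto simp: Bset_to_Tset_def Tset_to_Bset_def skip_index_def Tset_def)
  qed
  show "Bset_to_Tset n k i ` Bset n m \<subseteq> near_vertex_indices n k i m"
  proof clarify
    fix \<beta> assume "\<beta> \<in> Bset n m"
    then have "(\<Sum>d<n. \<beta> d) \<le> k" using mk by (simp add: Bset_def)
    then have "sum (Bset_to_Tset n k i \<beta>) {..n} = k"
      using i order[of \<beta>] by (simp add: vanishing_order_def sum.remove[of "{..n}" i] Bset_to_Tset_def)
    moreover have "\<forall>j>n. Bset_to_Tset n k i \<beta> j = 0" by (simp add: Bset_to_Tset_def)
    ultimately show "Bset_to_Tset n k i \<beta> \<in> near_vertex_indices n k i m"
      using \<open>\<beta> \<in> Bset n m\<close> by (simp add: near_vertex_indices_def Tset_def order Bset_def)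
  qed
  show "Tset_to_Bset n i ` near_vertex_indices n k i m \<subseteq> Bset n m"
    by (auto simp: Tset_to_Bset_def Bset_def near_vertex_indices_def vanishing_order_skip_index[OF i])
qed

theorem mainTheorem11:
  fixes n m k i :: nat and v :: "nat \<Rightarrow> nat \<Rightarrow> real"
  assumes "simplex_vertices n v"
    and "k \<ge> 2 * m + 1"
    and "i \<le> n"
  shows "bij_betw (\<lambda>u. \<lambda>\<beta>\<in>Bset n m. Dmulti n \<beta> u (v i))
           (PkD n v k i m) (Bset n m \<rightarrow>\<^sub>E (UNIV :: real set))"
proof -
  note s = assms(1) and i = assms(3)
  have "m \<le> k" using assms(2) by simp
  let ?I = "near_vertex_indices n k i m"
  have bij: "bij_betw (Bset_to_Tset n k i) (Bset n m) ?I"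
    by (rule bij_betw_Bset_near_vertex_indices[OF i \<open>m \<le> k\<close>])
  then have fin: "finite ?I" using finite_Bset bij_betw_finite by blast
  have jet: "Dmulti n \<beta> (\<lambda>x. \<Sum>\<alpha>\<in>?I. c \<alpha> * bary_monomial n v \<alpha> x) (v i)
      = (\<Sum>\<alpha>\<in>?I. c \<alpha> * Dmulti n \<beta> (bary_monomial n v \<alpha>) (v i))" for \<beta> c
    by (simp add: poly_linear_sum[OF poly_linear_Dmulti fin polyfun_bary_monomial[OF s]])
  show ?thesis
    unfolding PkD_eq
  proof (rule bij_betw_functionals_lincomb[OF fin finite_Bset])
    show "card ?I = card (Bset n m)" using bij by (simp add: bij_betw_same_card)
    show "\<forall>\<alpha>\<in>?I. c \<alpha> = 0"
      if "\<forall>\<beta>\<in>Bset n m. Dmulti n \<beta> (\<lambda>x. \<Sum>\<alpha>\<in>?I. c \<alpha> * bary_monomial n v \<alpha> x) (v i) = 0" for c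
      using that by (rule bary_monomial_coeffs_eq_0_if_jet_at_vertex_eq_0[OF s i fin order.refl])
  qed (rule jet)
qed

end
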